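(* For all finite multisets $\Gamma,\Delta$ of $\mathcal{L}_{A_m}^{\Box}$-formulas: the sequent $\Gamma\Rightarrow\Delta$ is derivable in $\mathsf{GK(A_m)}$ if and only if $\mathcal{I}(\Gamma\Rightarrow\Delta)$ is derivable in $\mathsf{K(A_m)}$.
   Context: $\mathcal{L}_{A_m}^{\Box}$-formulas are built from a countably infinite set $\mathrm{Var}$ of variables using binary $\to$ and unary $\Box$. Fix $p_0\in\mathrm{Var}$; $\overline{0}:=p_0\to p_0$, $\neg\varphi:=\varphi\to\overline{0}$, $\varphi\&\psi:=\neg\varphi\to\psi$, $0\varphi:=\overline{0}$, $(n+1)\varphi:=\varphi\&(n\varphi)$. The axiom system $\mathsf{K(A_m)}$ has axiom schemas (B) $(\varphi\to\psi)\to((\psi\to\chi)\to(\varphi\to\chi))$; (C) $(\varphi\to(\psi\to\chi))\to(\psi\to(\varphi\to\chi))$; (I) $\varphi\to\varphi$; (A) $((\varphi\to\psi)\to\psi)\to\varphi$; (K) $\Box(\varphi\to\psi)\to(\Box\varphi\to\Box\psi)$; (D$_n$) $\Box(n\varphi)\to n\Box\varphi$ ($n\ge2$); rules (mp) $\varphi,\varphi\to\psi/\psi$; (nec) $\varphi/\Box\varphi$; (con$_n$) $n\varphi/\varphi$ ($n\ge2$). A sequent $\Gamma\Rightarrow\Delta$ is an ordered pair of finite multisets of formulas; $\Gamma,\Delta$ denotes multiset union, $n\Gamma$ is $\Gamma$ repeated $n$ times, $n[\varphi]$ the multiset with $n$ copies of $\varphi$, $\Box\Gamma=[\Box\varphi:\varphi\in\Gamma]$.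 $\mathcal{I}(\varphi_1,\dots,\varphi_n\Rightarrow\psi_1,\dots,\psi_m):=(\varphi_1\&\dots\&\varphi_n)\to(\psi_1\&\dots\&\psi_m)$, an empty $\&$-combination being $\overline{0}$. The sequent calculus $\mathsf{GK(A_m)}$ has rules: (id) $\Delta\Rightarrow\Delta$ (no premises); (cut) from $\Gamma,\varphi\Rightarrow\Delta$ and $\Pi\Rightarrow\varphi,\Sigma$ infer $\Gamma,\Pi\Rightarrow\Sigma,\Delta$; (mix) from $\Gamma\Rightarrow\Delta$ and $\Pi\Rightarrow\Sigma$ infer $\Gamma,\Pi\Rightarrow\Sigma,\Delta$; (sc$_n$) from $n\Gamma\Rightarrow n\Delta$ infer $\Gamma\Rightarrow\Delta$ ($n\ge2$); ($\to\Rightarrow$) from $\Gamma,\psi\Rightarrow\varphi,\Delta$ infer $\Gamma,\varphi\to\psi\Rightarrow\Delta$; ($\Rightarrow\to$) from $\Gamma,\varphi\Rightarrow\psi,\Delta$ infer $\Gamma\Rightarrow\varphi\to\psi,\Delta$; ($\Box_n$) from $\Gamma\Rightarrow n[\varphi]$ infer $\Box\Gamma\Rightarrow n[\Box\varphi]$ ($n\ge0$). A derivation is a finite tree of sequents in which each node together with its parents is an instance of a rule. *)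

theory Defs
  imports "HOL-Library.Multiset"
begin

datatype fm = Var nat | Imp fm fm | Box fm

definition p0 :: fm where "p0 = Var 0"
definition zero :: fm where "zero = Imp p0 p0"
definition Neg :: "fm \<Rightarrow> fm" where "Neg A = Imp A zero"
definition Fus :: "fm \<Rightarrow> fm \<Rightarrow> fm" where "Fus A B = Imp (Neg A) B"

fun mult :: "nat \<Rightarrow> fm \<Rightarrow> fm" where
  "mult 0 A = zero"
| "mult (Suc n) A = Fus A (mult n A)"

inductive Kthm :: "fm \<Rightarrow> bool" where
  axB: "Kthm (Imp (Imp A B) (Imp (Imp B C) (Imp A C)))"
| axC: "Kthm (Imp (Imp A (Imp B C)) (Imp B (Imp A C)))"
| axI: "Kthm (Imp A A)"
| axA: "Kthm (Imp (Imp (Imp A B) B) A)"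
| axK: "Kthm (Imp (Box (Imp A B)) (Imp (Box A) (Box B)))"
| axD: "n \<ge> 2 \<Longrightarrow> Kthm (Imp (Box (mult n A)) (mult n (Box A)))"
| mp: "Kthm A \<Longrightarrow> Kthm (Imp A B) \<Longrightarrow> Kthm B"
| nec: "Kthm A \<Longrightarrow> Kthm (Box A)"
| con: "n \<ge> 2 \<Longrightarrow> Kthm (mult n A) \<Longrightarrow> Kthm A"

inductive GK :: "fm multiset \<Rightarrow> fm multiset \<Rightarrow> bool" where
  gid: "GK D D"
| gcut: "GK (G + {#A#}) D \<Longrightarrow> GK P ({#A#} + S) \<Longrightarrow> GK (G + P) (S + D)"
| gmix: "GK G D \<Longrightarrow> GK P S \<Longrightarrow> GK (G + P) (S + D)"
| gsc: "n \<ge> 2 \<Longrightarrow> GK (repeat_mset n G) (repeat_mset n D) \<Longrightarrow> GK G D"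
| gimpL: "GK (G + {#B#}) ({#A#} + D) \<Longrightarrow> GK (G + {#Imp A B#}) D"
| gimpR: "GK (G + {#A#}) ({#B#} + D) \<Longrightarrow> GK G ({#Imp A B#} + D)"
| gbox: "GK G (replicate_mset n A) \<Longrightarrow> GK (image_mset Box G) (replicate_mset n (Box A))"

fun Fuss :: "fm list \<Rightarrow> fm" where
  "Fuss [] = zero"
| "Fuss [A] = A"
| "Fuss (A # B # As) = Fus A (Fuss (B # As))"

definition Interp :: "fm list \<Rightarrow> fm list \<Rightarrow> fm" where
  "Interp gs ds = Imp (Fuss gs) (Fuss ds)"

end

theory Submission
  imports Defs
begin

text \<open>Modulo provable equivalence the formulas form an abelian group (the Lindenbaum algebra of
  \<open>K(A_m)\<close>): axioms B, C, I and A make \<open>A \<rightarrow> B\<close> the difference \<open>B - A\<close>, so \<open>\<overline>0\<close> is \<open>0\<close>,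
  \<open>\<not>\<close> is negation and \<open>&\<close> is addition. A sequent \<open>\<Gamma> \<Rightarrow> \<Delta>\<close> is sound when \<open>\<Sigma>\<Delta> - \<Sigma>\<Gamma>\<close> is the
  class of a theorem; every rule of \<open>GK(A_m)\<close> preserves this, the box rule because \<open>\<Box>\<close> is
  superadditive on theorems (axiom K) and commutes with multiples up to a theorem (axiom \<open>D\<^sub>n\<close>).
  Conversely, every axiom and rule of \<open>K(A_m)\<close> is derivable in \<open>GK(A_m)\<close>, and cutting with the
  derivable sequents \<open>\<Gamma> \<Rightarrow> &\<Gamma>\<close> and \<open>&\<Delta> \<Rightarrow> \<Delta>\<close> recovers \<open>\<Gamma> \<Rightarrow> \<Delta>\<close> from \<open>\<mathcal>I(\<Gamma> \<Rightarrow> \<Delta>)\<close>.\<close>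

lemma Kthm_imp_swap: "Kthm (Imp A (Imp B C)) \<Longrightarrow> Kthm (Imp B (Imp A C))"
  by (meson axC mp)

lemma Kthm_imp_trans: "Kthm (Imp A B) \<Longrightarrow> Kthm (Imp B C) \<Longrightarrow> Kthm (Imp A C)"
  by (meson axB mp)

lemma Kthm_imp_mono_left: "Kthm (Imp A B) \<Longrightarrow> Kthm (Imp (Imp B C) (Imp A C))"
  by (meson axB mp)

lemma Kthm_imp_mono_right: "Kthm (Imp B C) \<Longrightarrow> Kthm (Imp (Imp A B) (Imp A C))"
  by (meson axB Kthm_imp_swap mp)

lemma Kthm_assertion: "Kthm (Imp A (Imp (Imp A B) B))"
  by (rule Kthm_imp_swap) (rule axI)

section \<open>The Lindenbaum algebra\<close>

definition Kequiv :: "fm \<Rightarrow> fm \<Rightarrow> bool" where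
  "Kequiv A B \<longleftrightarrow> Kthm (Imp A B) \<and> Kthm (Imp B A)"

lemma equivp_Kequiv: "equivp Kequiv"
  unfolding Kequiv_def
  by (rule equivpI; auto simp: reflp_def symp_def transp_def intro: axI Kthm_imp_trans)

quotient_type lind = fm / Kequiv
  by (rule equivp_Kequiv)

lift_definition lind_class :: "fm \<Rightarrow> lind" is "\<lambda>A. A" .

lift_definition lind_imp :: "lind \<Rightarrow> lind \<Rightarrow> lind" is Imp
  unfolding Kequiv_def by (meson Kthm_imp_mono_left Kthm_imp_mono_right Kthm_imp_trans)

lift_definition lind_box :: "lind \<Rightarrow> lind" is Box
  unfolding Kequiv_def by (meson axK nec mp)

lift_definition lind_thm :: "lind \<Rightarrow> bool" is Kthm
  unfolding Kequiv_def by (meson mp)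

lemma lind_class_surj: "\<exists>A. x = lind_class A"
  by (metis Quotient3_abs_rep Quotient3_lind lind_class.abs_eq)

lemma lind_class_eqI: "Kthm (Imp A B) \<Longrightarrow> Kthm (Imp B A) \<Longrightarrow> lind_class A = lind_class B"
  by (metis Kequiv_def lind_class.abs_eq lind.abs_eq_iff)

lemma lind_imp_class: "lind_imp (lind_class A) (lind_class B) = lind_class (Imp A B)"
  by (metis lind_class.abs_eq lind_imp.abs_eq)

lemma lind_box_class: "lind_box (lind_class A) = lind_class (Box A)"
  by (metis lind_class.abs_eq lind_box.abs_eq)

lemma lind_thm_class: "lind_thm (lind_class A) \<longleftrightarrow> Kthm A"
  by (metis lind_class.abs_eq lind_thm.abs_eq)

lemma lind_thm_mp: "lind_thm x \<Longrightarrow> lind_thm (lind_imp x y) \<Longrightarrow> lind_thm y"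
  by (metis lind_class_surj lind_imp_class lind_thm_class mp)

lemma lind_imp_antisym: "lind_thm (lind_imp x y) \<Longrightarrow> lind_thm (lind_imp y x) \<Longrightarrow> x = y"
  by (metis lind_class_surj lind_imp_class lind_thm_class lind_class_eqI)

lemma lind_thm_axB: "lind_thm (lind_imp (lind_imp x y) (lind_imp (lind_imp y z) (lind_imp x z)))"
  by (metis lind_class_surj lind_imp_class lind_thm_class axB)

lemma lind_imp_swap: "lind_imp x (lind_imp y z) = lind_imp y (lind_imp x z)"
proof -
  obtain A B C where "x = lind_class A" "y = lind_class B" "z = lind_class C"
    using lind_class_surj by metis
  then show ?thesis by (simp add: lind_imp_class lind_class_eqI axC)
qed

lemma lind_imp_imp_cancel: "lind_imp (lind_imp x y) y = x"
proof -
  obtain A B where "x = lind_class A" "y = lind_class B"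
    using lind_class_surj by metis
  then show ?thesis by (simp add: lind_imp_class lind_class_eqI axA Kthm_assertion)
qed

lemma lind_imp_contrapos: "lind_imp x y = lind_imp (lind_imp y z) (lind_imp x z)"
proof (rule lind_imp_antisym)
  show "lind_thm (lind_imp (lind_imp x y) (lind_imp (lind_imp y z) (lind_imp x z)))"
    by (rule lind_thm_axB)
  have "lind_thm (lind_imp (lind_imp (lind_imp y z) (lind_imp x z))
      (lind_imp (lind_imp (lind_imp x z) z) (lind_imp (lind_imp y z) z)))"
    by (rule lind_thm_axB)
  then show "lind_thm (lind_imp (lind_imp (lind_imp y z) (lind_imp x z)) (lind_imp x y))"
    by (simp add: lind_imp_imp_cancel)
qed

abbreviation lind_zero :: lind where "lind_zero \<equiv> lind_class zero"

lemma lind_zero_imp_zero: "lind_imp lind_zero lind_zero = lind_zero"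
proof -
  define p where "p = lind_class p0"
  have zero_eq: "lind_zero = lind_imp p p"
    by (simp add: p_def zero_def lind_imp_class)
  then have "lind_imp lind_zero p = p"
    using lind_imp_imp_cancel[of p p] by simp
  then have "lind_zero = lind_imp p (lind_imp lind_zero p)"
    using zero_eq by simp
  also have "\<dots> = lind_imp lind_zero (lind_imp p p)"
    by (rule lind_imp_swap)
  finally show ?thesis
    using zero_eq by simp
qed

lemma lind_zero_imp: "lind_imp lind_zero y = y"
  by (metis lind_imp_imp_cancel lind_imp_contrapos lind_zero_imp_zero)

lemma lind_imp_self: "lind_imp x x = lind_zero"
  using lind_imp_imp_cancel[of lind_zero x] lind_zero_imp by simp

instantiation lind :: ab_group_add
begin

definition zero_lind_def: "0 = lind_zero"
definition uminus_lind_def: "- x = lind_imp x lind_zero"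
definition plus_lind_def: "x + y = lind_imp (- x) y"
definition minus_lind_def: "x - y = x + - (y :: lind)"

instance
proof
  fix a b c :: lind
  show "a + b + c = a + (b + c)"
    unfolding plus_lind_def uminus_lind_def
    by (metis lind_imp_swap lind_imp_imp_cancel lind_imp_contrapos)
  show "a + b = b + a"
    unfolding plus_lind_def uminus_lind_def
    by (metis lind_imp_imp_cancel lind_imp_contrapos)
  show "0 + a = a"
    unfolding plus_lind_def uminus_lind_def zero_lind_def
    by (simp add: lind_zero_imp_zero lind_zero_imp)
  show "- a + a = 0"
    unfolding plus_lind_def uminus_lind_def zero_lind_def
    by (simp add: lind_imp_imp_cancel lind_imp_self)
  show "a - b = a + - b"
    by (rule minus_lind_def)
qed

end

lemma lind_imp_eq_diff: "lind_imp x y = y - x"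
  unfolding minus_lind_def plus_lind_def uminus_lind_def by (rule lind_imp_contrapos)

lemma lind_class_Imp: "lind_class (Imp A B) = lind_class B - lind_class A"
  by (simp add: lind_imp_class[symmetric] lind_imp_eq_diff)

lemma lind_class_zero: "lind_class zero = 0"
  by (simp add: zero_lind_def)

lemma lind_class_Fus: "lind_class (Fus A B) = lind_class A + lind_class B"
  by (simp add: Fus_def Neg_def lind_class_Imp lind_class_zero)

lemma lind_class_Fuss: "lind_class (Fuss As) = sum_list (map lind_class As)"
  by (induction As rule: Fuss.induct) (auto simp: lind_class_zero lind_class_Fus)

lemma Kthm_Imp_iff: "Kthm (Imp A B) \<longleftrightarrow> lind_thm (lind_class B - lind_class A)"
  by (simp add: lind_thm_class[symmetric] lind_class_Imp)

lemma lind_thm_zero: "lind_thm 0"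
  by (metis lind_thm_class lind_class_zero axI zero_def)

lemma lind_thm_add: "lind_thm a \<Longrightarrow> lind_thm b \<Longrightarrow> lind_thm (a + b)"
  by (metis lind_thm_mp lind_imp_eq_diff add_diff_cancel_right')

fun ntimes :: "nat \<Rightarrow> 'a::monoid_add \<Rightarrow> 'a" where
  "ntimes 0 x = 0"
| "ntimes (Suc n) x = x + ntimes n x"

lemma ntimes_diff: "ntimes n (a - b) = ntimes n a - ntimes n (b :: 'a::ab_group_add)"
  by (induction n) (auto simp: algebra_simps)

lemma sum_mset_replicate_mset: "sum_mset (replicate_mset n x) = ntimes n x"
  by (induction n) auto

lemma sum_mset_image_repeat_mset:
  "sum_mset (image_mset f (repeat_mset n M)) = ntimes n (sum_mset (image_mset f M))"
  by (induction n) auto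

lemma lind_class_mult: "lind_class (mult n A) = ntimes n (lind_class A)"
  by (induction n) (auto simp: lind_class_zero lind_class_Fus)

lemma lind_thm_ntimes_cancel: "n \<ge> 2 \<Longrightarrow> lind_thm (ntimes n x) \<Longrightarrow> lind_thm x"
  by (metis lind_class_surj lind_class_mult lind_thm_class con)

lemma lind_thm_box_mono: "lind_thm (b - a) \<Longrightarrow> lind_thm (lind_box b - lind_box a)"
  by (metis lind_class_surj lind_box_class Kthm_Imp_iff axK nec mp)

lemma lind_thm_box_diff: "lind_thm (lind_box b - lind_box a - lind_box (b - a))"
proof -
  obtain A B where "a = lind_class A" "b = lind_class B"
    using lind_class_surj by metis
  then show ?thesis
    using axK[of A B] by (simp add: Kthm_Imp_iff lind_class_Imp flip: lind_box_class)
qed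

lemma lind_thm_box_add: "lind_thm (lind_box (a + b) - lind_box a - lind_box b)"
  using lind_thm_box_diff[of "a + b" a] by simp

lemma lind_thm_box_zero: "lind_thm (lind_box 0)"
  by (metis lind_thm_class lind_box_class lind_class_zero axI zero_def nec)

lemma lind_thm_box_sum_mset:
  "lind_thm (lind_box (sum_mset M) - sum_mset (image_mset lind_box M))"
proof (induction M)
  case empty
  then show ?case using lind_thm_box_zero by simp
next
  case (add x M)
  have "lind_thm ((lind_box (x + sum_mset M) - lind_box x - lind_box (sum_mset M)) +
      (lind_box (sum_mset M) - sum_mset (image_mset lind_box M)))"
    using lind_thm_add[OF lind_thm_box_add add.IH] .
  then show ?case
    by (simp add: algebra_simps)
qed

text \<open>Axiom \<open>D\<^sub>n\<close> covers \<open>n \<ge> 2\<close>; for \<open>n = 1\<close> the claim is trivial and for \<open>n = 0\<close> it is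
  the instance \<open>\<Box>(\<overline>0 \<rightarrow> \<overline>0) \<rightarrow> (\<Box>\<overline>0 \<rightarrow> \<Box>\<overline>0)\<close> of axiom K.\<close>

lemma lind_thm_ntimes_box: "lind_thm (ntimes n (lind_box a) - lind_box (ntimes n a))"
proof -
  consider "n = 0" | "n = 1" | "n \<ge> 2" by linarith
  then show ?thesis
  proof cases
    case 1
    then show ?thesis using lind_thm_box_diff[of 0 0] by simp
  next
    case 2
    then show ?thesis using lind_thm_zero by simp
  next
    case 3
    obtain A where "a = lind_class A"
      using lind_class_surj by metis
    then show ?thesis
      using axD[OF 3, of A] by (simp add: Kthm_Imp_iff lind_class_mult flip: lind_box_class)
  qed
qed

section \<open>Soundness\<close>

abbreviation lind_sum :: "fm multiset \<Rightarrow> lind" where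
  "lind_sum M \<equiv> sum_mset (image_mset lind_class M)"

lemma lind_sum_Box: "lind_sum (image_mset Box M) = sum_mset (image_mset lind_box (image_mset lind_class M))"
  by (simp add: multiset.map_comp comp_def lind_box_class)

lemma lind_thm_box_rule:
  assumes "lind_thm (ntimes n (lind_class A) - lind_sum G)"
  shows "lind_thm (lind_sum (replicate_mset n (Box A)) - lind_sum (image_mset Box G))"
proof -
  let ?a = "lind_class A" and ?g = "lind_sum G"
  have "lind_thm ((ntimes n (lind_box ?a) - lind_box (ntimes n ?a))
      + (lind_box (ntimes n ?a) - lind_box ?g)
      + (lind_box ?g - sum_mset (image_mset lind_box (image_mset lind_class G))))"
    by (intro lind_thm_add lind_thm_ntimes_box lind_thm_box_mono lind_thm_box_sum_mset assms)
  then show ?thesis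
    by (simp add: lind_sum_Box sum_mset_replicate_mset lind_box_class)
qed

lemma GK_imp_lind_thm: "GK G D \<Longrightarrow> lind_thm (lind_sum D - lind_sum G)"
proof (induction rule: GK.induct)
  case (gid D)
  then show ?case using lind_thm_zero by simp
next
  case (gcut G A D P S)
  from lind_thm_add[OF gcut.IH] show ?case by (simp add: algebra_simps)
next
  case (gmix G D P S)
  from lind_thm_add[OF gmix.IH] show ?case by (simp add: algebra_simps)
next
  case (gsc n G D)
  have "lind_thm (ntimes n (lind_sum D - lind_sum G))"
    using gsc.IH by (simp add: sum_mset_image_repeat_mset ntimes_diff)
  then show ?case using lind_thm_ntimes_cancel gsc.hyps by blast
next
  case (gimpL G B A D)
  from gimpL.IH show ?case by (simp add: lind_class_Imp algebra_simps)
next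
  case (gimpR G A B D)
  from gimpR.IH show ?case by (simp add: lind_class_Imp algebra_simps)
next
  case (gbox G n A)
  then show ?case
    by (intro lind_thm_box_rule) (simp add: sum_mset_replicate_mset)
qed

lemma GK_imp_Kthm_Interp: "GK (mset gs) (mset ds) \<Longrightarrow> Kthm (Interp gs ds)"
  using GK_imp_lind_thm[of "mset gs" "mset ds"]
  by (simp add: Interp_def Kthm_Imp_iff lind_class_Fuss sum_mset_sum_list flip: mset_map)

lemma GK_cong: "GK G D \<Longrightarrow> G = G' \<Longrightarrow> D = D' \<Longrightarrow> GK G' D'"
  by simp

lemma GK_zero_left: "GK {#zero#} {#}"
  using gimpL[of "{#}" p0 p0 "{#}"] gid[of "{#p0#}"] by (simp add: zero_def)

lemma GK_zero_right: "GK {#} {#zero#}"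
  using gimpR[of "{#}" p0 p0 "{#}"] gid[of "{#p0#}"] by (simp add: zero_def)

lemma GK_Imp_self_left: "GK {#Imp A A#} {#}"
  using gimpL[of "{#}" A A "{#}"] gid[of "{#A#}"] by simp

lemma GK_cancel1: "GK (add_mset A G) (add_mset A D) \<Longrightarrow> GK G D"
proof -
  assume "GK (add_mset A G) (add_mset A D)"
  then have "GK G ({#Imp A A#} + D)"
    using gimpR[of G A A D] by simp
  from gcut[of "{#}" "Imp A A" "{#}", OF _ this] GK_Imp_self_left show ?thesis
    by simp
qed

lemma GK_cancel: "GK (G + M) (M + D) \<Longrightarrow> GK G D"
proof (induction M arbitrary: G D)
  case empty
  then show ?case by simp
next
  case (add A M)
  then have "GK (add_mset A (G + M)) (add_mset A (M + D))" by simp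
  then show ?case using GK_cancel1 add.IH by blast
qed

lemma GK_cut_mset: "GK (G + M) D \<Longrightarrow> GK P (M + S) \<Longrightarrow> GK (G + P) (S + D)"
proof -
  assume "GK (G + M) D" and "GK P (M + S)"
  from gmix[OF this] have "GK ((G + P) + M) (M + (S + D))"
    by (simp add: ac_simps)
  then show ?thesis by (rule GK_cancel)
qed

lemma GK_cut_single: "GK G {#A#} \<Longrightarrow> GK {#A#} D \<Longrightarrow> GK G D"
  using GK_cut_mset[of "{#}" "{#A#}" D G "{#}"] by simp

lemma GK_modus_ponens: "GK {#A, Imp A B#} {#B#}"
  using gimpL[of "{#A#}" B A "{#B#}"] gid[of "{#A, B#}"] by (simp add: add_mset_commute)

lemma GK_Fus_left: "GK {#Fus A B#} {#A, B#}"
proof -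
  have "GK ({#B#} + {#A#}) ({#zero#} + {#A, B#})"
    by (rule GK_cong[OF gmix[OF gid[of "{#B, A#}"] GK_zero_right]]) (simp_all add: add_mset_commute)
  from gimpR[OF this] have "GK ({#} + {#B#}) ({#Neg A#} + {#A, B#})"
    by (simp add: Neg_def)
  from gimpL[OF this] show ?thesis
    by (simp add: Fus_def)
qed

lemma GK_Fus_right: "GK {#A, B#} {#Fus A B#}"
proof -
  have "GK ({#A, B#} + {#zero#}) ({#A#} + {#B#})"
    by (rule GK_cong[OF gmix[OF gid[of "{#A, B#}"] GK_zero_left]]) (simp_all add: add_mset_commute)
  from gimpL[OF this] have "GK ({#A, B#} + {#Neg A#}) ({#B#} + {#})"
    by (simp add: Neg_def)
  from gimpR[OF this] show ?thesis
    by (simp add: Fus_def)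
qed

lemma GK_mult_left: "GK {#mult n A#} (replicate_mset n A)"
proof (induction n)
  case 0
  then show ?case using GK_zero_left by simp
next
  case (Suc n)
  have "GK {#Fus A (mult n A)#} ({#mult n A#} + {#A#})"
    by (rule GK_cong[OF GK_Fus_left]) simp_all
  from GK_cut_mset[of "{#}", OF _ this] Suc show ?case
    by simp
qed

lemma GK_mult_right: "GK (replicate_mset n A) {#mult n A#}"
proof (induction n)
  case 0
  then show ?case using GK_zero_right by simp
next
  case (Suc n)
  have "GK ({#A#} + {#mult n A#}) {#Fus A (mult n A)#}"
    by (rule GK_cong[OF GK_Fus_right]) simp_all
  from GK_cut_mset[OF this, of _ "{#}"] Suc show ?case
    by simp
qed

lemma GK_Fuss_left: "GK {#Fuss As#} (mset As)"
proof (induction As rule: Fuss.induct)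
  case 1
  then show ?case using GK_zero_left by simp
next
  case (2 A)
  then show ?case using gid by simp
next
  case (3 A B As)
  have "GK {#Fus A (Fuss (B # As))#} ({#Fuss (B # As)#} + {#A#})"
    by (rule GK_cong[OF GK_Fus_left]) simp_all
  from GK_cut_mset[of "{#}", OF _ this] 3 show ?case
    by (simp add: add_mset_commute)
qed

lemma GK_Fuss_right: "GK (mset As) {#Fuss As#}"
proof (induction As rule: Fuss.induct)
  case 1
  then show ?case using GK_zero_right by simp
next
  case (2 A)
  then show ?case using gid by simp
next
  case (3 A B As)
  have "GK ({#A#} + {#Fuss (B # As)#}) {#Fus A (Fuss (B # As))#}"
    by (rule GK_cong[OF GK_Fus_right]) simp_all
  from GK_cut_mset[OF this, of _ "{#}"] 3 show ?case
    by (simp add: add_mset_commute)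
qed

section \<open>Completeness\<close>

lemma Kthm_imp_GK: "Kthm A \<Longrightarrow> GK {#} {#A#}"
proof (induction rule: Kthm.induct)
  case (axB A B C)
  have "GK ({#A, B#} + {#C#}) ({#B#} + {#A, C#})"
    by (rule GK_cong[OF gid[of "{#A, B, C#}"]]) (simp_all add: add_mset_commute)
  from gimpL[OF this] have "GK ({#A, Imp B C#} + {#B#}) ({#A#} + {#C#})"
    by (rule GK_cong) (simp_all add: add_mset_commute)
  from gimpL[OF this] have "GK ({#Imp A B, Imp B C#} + {#A#}) ({#C#} + {#})"
    by (rule GK_cong) (simp_all add: add_mset_commute)
  from gimpR[OF this] have "GK ({#Imp A B#} + {#Imp B C#}) ({#Imp A C#} + {#})"
    by (rule GK_cong) (simp_all add: add_mset_commute)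
  from gimpR[OF this] have "GK ({#} + {#Imp A B#}) ({#Imp (Imp B C) (Imp A C)#} + {#})"
    by simp
  from gimpR[OF this] show ?case
    by simp
next
  case (axC A B C)
  have "GK ({#B, A#} + {#C#}) ({#B#} + {#A, C#})"
    by (rule GK_cong[OF gid[of "{#B, A, C#}"]]) (simp_all add: add_mset_commute)
  from gimpL[OF this] have "GK ({#B, A#} + {#Imp B C#}) ({#A#} + {#C#})"
    by (simp add: add_mset_commute)
  from gimpL[OF this] have "GK ({#Imp A (Imp B C), B#} + {#A#}) ({#C#} + {#})"
    by (rule GK_cong) (simp_all add: add_mset_commute)
  from gimpR[OF this] have "GK ({#Imp A (Imp B C)#} + {#B#}) ({#Imp A C#} + {#})"
    by (rule GK_cong) (simp_all add: add_mset_commute)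
  from gimpR[OF this] have "GK ({#} + {#Imp A (Imp B C)#}) ({#Imp B (Imp A C)#} + {#})"
    by simp
  from gimpR[OF this] show ?case
    by simp
next
  case (axI A)
  show ?case
    using gimpR[of "{#}" A A "{#}"] gid[of "{#A#}"] by simp
next
  case (axA A B)
  have "GK ({#B#} + {#A#}) ({#B#} + {#A#})"
    by (rule gid)
  from gimpR[OF this] have "GK ({#} + {#B#}) ({#Imp A B#} + {#A#})"
    by simp
  from gimpL[OF this] have "GK ({#} + {#Imp (Imp A B) B#}) ({#A#} + {#})"
    by simp
  from gimpR[OF this] show ?case
    by simp
next
  case (axK A B)
  have "GK {#A, Imp A B#} (replicate_mset 1 B)"
    using GK_modus_ponens by simp
  from gbox[OF this] have "GK ({#Box (Imp A B)#} + {#Box A#}) ({#Box B#} + {#})"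
    by (simp add: add_mset_commute)
  from gimpR[OF this] have "GK ({#} + {#Box (Imp A B)#}) ({#Imp (Box A) (Box B)#} + {#})"
    by simp
  from gimpR[OF this] show ?case
    by simp
next
  case (axD n A)
  have "GK {#Box (mult n A)#} (replicate_mset n (Box A) + {#})"
    using gbox[OF GK_mult_left[of n A]] by simp
  from GK_cut_mset[of "{#}", OF _ this] GK_mult_right
  have "GK ({#} + {#Box (mult n A)#}) ({#mult n (Box A)#} + {#})"
    by simp
  from gimpR[OF this] show ?case
    by simp
next
  case (mp A B)
  have "GK ({#A#} + {#Imp A B#}) {#B#}"
    using GK_modus_ponens by (simp add: add_mset_commute)
  from GK_cut_mset[OF this, of "{#}" "{#}"] mp.IH(2) have "GK {#A#} {#B#}"
    by simp
  then show ?case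
    using GK_cut_single[OF mp.IH(1)] by simp
next
  case (nec A)
  from gbox[of "{#}" 1 A] nec.IH show ?case
    by simp
next
  case (con n A)
  from GK_cut_single[OF con.IH GK_mult_left]
  have "GK (repeat_mset n {#}) (repeat_mset n {#A#})"
    by simp
  from gsc[OF con.hyps(1) this] show ?case .
qed

lemma Kthm_Interp_imp_GK: "Kthm (Interp gs ds) \<Longrightarrow> GK (mset gs) (mset ds)"
proof -
  assume "Kthm (Interp gs ds)"
  then have "GK {#} ({#Imp (Fuss gs) (Fuss ds)#} + {#})"
    unfolding Interp_def by (simp add: Kthm_imp_GK)
  moreover have "GK ({#Fuss gs#} + {#Imp (Fuss gs) (Fuss ds)#}) {#Fuss ds#}"
    using GK_modus_ponens by (simp add: add_mset_commute)
  ultimately have "GK {#Fuss gs#} {#Fuss ds#}"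
    using GK_cut_mset by fastforce
  then show ?thesis
    using GK_cut_single GK_Fuss_left GK_Fuss_right by blast
qed

theorem proposition4p3:
  fixes gs ds :: "fm list"
  shows "GK (mset gs) (mset ds) \<longleftrightarrow> Kthm (Interp gs ds)"
  using GK_imp_Kthm_Interp Kthm_Interp_imp_GK by blast

end
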